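(* For every $n\ge1$, the set $\mathfrak S_n(2413,4213)$ is invariant under the modified Foata--Strehl action: for every $\pi\in\mathfrak S_n(2413,4213)$ and every $S\subseteq[n]$, $\varphi'_S(\pi)\in\mathfrak S_n(2413,4213)$.
   Context: $\mathfrak S_n(2413,4213)$ is the set of permutations of $[n]$ with no subsequence order isomorphic to $2413$ or $4213$. For $\pi\in\mathfrak S_n$ use the convention $\pi_0=\pi_{n+1}=-\infty$; the value $x=\pi_i$ is a double ascent if $\pi_{i-1}<\pi_i<\pi_{i+1}$, a double descent if $\pi_{i-1}>\pi_i>\pi_{i+1}$, a peak if $\pi_{i-1}<\pi_i>\pi_{i+1}$, a valley if $\pi_{i-1}>\pi_i<\pi_{i+1}$. For $x\in[n]$, write $\pi=w_1w_2\,x\,w_3w_4$ where $w_2$ (resp. $w_3$) is the maximal (possibly empty) contiguous factor immediately to the left (resp. right) of $x$ all of whose letters exceed $x$, and set $\varphi_x(\pi)=w_1w_3\,x\,w_2w_4$. Define $\varphi'_x(\pi)=\varphi_x(\pi)$ if $x$ is a double ascent or double descent of $\pi$, and $\varphi'_x(\pi)=\pi$ otherwise (peak or valley). These are commuting involutions; for $S\subseteq[n]$, $\varphi'_S=\prod_{x\in S}\varphi'_x$. *)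

theory Defs
  imports Main "HOL-Combinatorics.Multiset_Permutations"
begin

text \<open>Permutations of [n] are represented in one-line notation as lists
  (element at position i, 0-based, is pi_(i+1)).\<close>

definition contains_pattern :: "nat list \<Rightarrow> nat list \<Rightarrow> bool" where
  "contains_pattern p sigma \<longleftrightarrow>
     (\<exists>idx. length idx = length sigma \<and> sorted_wrt (<) idx \<and>
        (\<forall>j \<in> set idx. j < length p) \<and>
        (\<forall>a < length sigma. \<forall>b < length sigma.
            (p ! (idx ! a) < p ! (idx ! b)) \<longleftrightarrow> (sigma ! a < sigma ! b)))"

definition Av_2413_4213 :: "nat \<Rightarrow> nat list set" where
  "Av_2413_4213 n = {p \<in> permutations_of_set {1..n}.
      \<not> contains_pattern p [2,4,1,3] \<and> \<not> contains_pattern p [4,2,1,3]}"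

definition pos :: "nat list \<Rightarrow> nat \<Rightarrow> nat" where
  "pos p x = length (takeWhile (\<lambda>y. y \<noteq> x) p)"

text \<open>Foata--Strehl map phi_x: p = w1 w2 x w3 w4 maps to w1 w3 x w2 w4, where w2 (w3)
  is the maximal factor immediately left (right) of x with all letters greater than x.\<close>
definition phi :: "nat \<Rightarrow> nat list \<Rightarrow> nat list" where
  "phi x p = (let i = pos p x;
                   L = take i p; R = drop (Suc i) p;
                   w2 = rev (takeWhile (\<lambda>y. x < y) (rev L));
                   w1 = take (length L - length w2) L;
                   w3 = takeWhile (\<lambda>y. x < y) R;
                   w4 = dropWhile (\<lambda>y. x < y) R
               in w1 @ w3 @ [x] @ w2 @ w4)"

text \<open>Double ascent / double descent with convention pi_0 = pi_(n+1) = -infinity.\<close>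
definition double_ascent :: "nat list \<Rightarrow> nat \<Rightarrow> bool" where
  "double_ascent p x = (let i = pos p x in
      (i = 0 \<or> p ! (i - 1) < x) \<and> (Suc i < length p \<and> x < p ! Suc i))"

definition double_descent :: "nat list \<Rightarrow> nat \<Rightarrow> bool" where
  "double_descent p x = (let i = pos p x in
      (i > 0 \<and> x < p ! (i - 1)) \<and> (Suc i \<ge> length p \<or> p ! Suc i < x))"

definition phi' :: "nat \<Rightarrow> nat list \<Rightarrow> nat list" where
  "phi' x p = (if double_ascent p x \<or> double_descent p x then phi x p else p)"

text \<open>phi'_S = product (composition) of phi'_x over x in S, applied in increasing order
  of x (the phi'_x commute, so the order is immaterial).\<close>
definition phi'_set :: "nat set \<Rightarrow> nat list \<Rightarrow> nat list" where
  "phi'_set S p = fold phi' (sorted_list_of_set S) p"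

end

theory Submission
  imports Defs
begin

text \<open>At peaks and valleys phi'_x is the identity; otherwise it moves x across the maximal
  block B of larger letters next to it: at a double ascent, A x B C becomes A B x C where C is
  empty or starts below x; at a double descent, A B x C becomes A x B C where A is empty or ends
  below x. This changes only the relative order of x and the letters of B. Read an occurrence
  of 2413 or 4213 as an ascent c < d preceded by u, v with c < u < d < v. An occurrence created
  by the move must therefore have c = x: after a move to the right, u or v lies in B and d in C,
  and the first letter of C can replace x; after a move to the left, d lies in B and u, v in A,
  and the last letter of A can replace x. Either way the original permutation already contained
  the pattern.\<close>

definition precedes :: "'a list \<Rightarrow> 'a \<Rightarrow> 'a \<Rightarrow> bool" where
  "precedes L u v \<longleftrightarrow> (\<exists>i j. i < j \<and> j < length L \<and> L ! i = u \<and> L ! j = v)"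

lemma precedes_Nil [simp]: "\<not> precedes [] u v"
  by (simp add: precedes_def)

lemma precedes_Cons [simp]:
  "precedes (y # ys) u v \<longleftrightarrow> u = y \<and> v \<in> set ys \<or> precedes ys u v"
proof
  assume "precedes (y # ys) u v"
  then obtain i j where "i < j" "j < length (y # ys)" "(y # ys) ! i = u" "(y # ys) ! j = v"
    unfolding precedes_def by blast
  then show "u = y \<and> v \<in> set ys \<or> precedes ys u v"
  proof (cases i)
    case 0
    with \<open>i < j\<close> \<open>j < length (y # ys)\<close> \<open>(y # ys) ! i = u\<close> \<open>(y # ys) ! j = v\<close> show ?thesis
      by (cases j) auto
  next
    case (Suc i')
    with \<open>i < j\<close> \<open>j < length (y # ys)\<close> \<open>(y # ys) ! i = u\<close> \<open>(y # ys) ! j = v\<close>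
    have "precedes ys u v"
      unfolding precedes_def by (cases j) auto
    then show ?thesis ..
  qed
next
  assume "u = y \<and> v \<in> set ys \<or> precedes ys u v"
  then show "precedes (y # ys) u v"
    unfolding precedes_def
  proof (elim disjE conjE exE)
    fix i j assume "i < j" "j < length ys" "ys ! i = u" "ys ! j = v"
    then show "\<exists>i j. i < j \<and> j < length (y # ys) \<and> (y # ys) ! i = u \<and> (y # ys) ! j = v"
      by (intro exI[of _ "Suc i"] exI[of _ "Suc j"]) simp
  next
    assume "u = y" "v \<in> set ys"
    then obtain j where "j < length ys" "ys ! j = v" by (auto simp: in_set_conv_nth)
    with \<open>u = y\<close> show "\<exists>i j. i < j \<and> j < length (y # ys) \<and> (y # ys) ! i = u \<and> (y # ys) ! j = v"
      by (intro exI[of _ 0] exI[of _ "Suc j"]) simp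
  qed
qed

lemma precedes_append [simp]:
  "precedes (xs @ ys) u v \<longleftrightarrow> precedes xs u v \<or> u \<in> set xs \<and> v \<in> set ys \<or> precedes ys u v"
  by (induction xs) auto

lemma precedes_set: "precedes L u v \<Longrightarrow> u \<in> set L \<and> v \<in> set L"
  unfolding precedes_def by auto

lemma precedes_nth: "i < j \<Longrightarrow> j < length L \<Longrightarrow> precedes L (L ! i) (L ! j)"
  unfolding precedes_def by blast

lemma precedes_hd:
  "v \<in> set C \<Longrightarrow> v \<noteq> hd C \<Longrightarrow> precedes C (hd C) v"
  by (cases C) auto

lemma precedes_last:
  "u \<in> set A \<Longrightarrow> u \<noteq> last A \<Longrightarrow> precedes A u (last A)"
  by (induction A rule: rev_induct) auto

lemma precedes_pivot:
  assumes "distinct (xs @ x # ys)"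
  shows "precedes (xs @ x # ys) u x \<longleftrightarrow> u \<in> set xs"
    and "precedes (xs @ x # ys) x v \<longleftrightarrow> v \<in> set ys"
  using assms by (auto dest: precedes_set)

text \<open>The relative order of u and v distinguishes 2413 from 4213; merging the two patterns is what
  frees the argument from tracking it.\<close>
definition contains_2413_4213 :: "'a::linorder list \<Rightarrow> bool" where
  "contains_2413_4213 L \<longleftrightarrow>
     (\<exists>u v c d. precedes L u c \<and> precedes L v c \<and> precedes L c d \<and> c < u \<and> u < d \<and> d < v)"

lemma contains_2413_4213I:
  "precedes L u c \<Longrightarrow> precedes L v c \<Longrightarrow> precedes L c d \<Longrightarrow> c < u \<Longrightarrow> u < d \<Longrightarrow> d < v
   \<Longrightarrow> contains_2413_4213 L"
  unfolding contains_2413_4213_def by blast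

lemma all_less_4: "(\<forall>i<(4::nat). P i) \<longleftrightarrow> P 0 \<and> P 1 \<and> P 2 \<and> P 3"
  by (auto simp: numeral_eq_Suc less_Suc_eq)

lemma length_4_conv: "length idx = 4 \<longleftrightarrow> (\<exists>i j k l. idx = [i, j, k, l])"
  by (auto simp: numeral_eq_Suc length_Suc_conv)

lemma contains_pattern_length_4:
  assumes len: "length \<sigma> = 4"
  shows "contains_pattern L \<sigma> \<longleftrightarrow> (\<exists>i j k l. i < j \<and> j < k \<and> k < l \<and> l < length L \<and>
    (\<forall>a<4. \<forall>b<4. [L ! i, L ! j, L ! k, L ! l] ! a < [L ! i, L ! j, L ! k, L ! l] ! b \<longleftrightarrow> \<sigma> ! a < \<sigma> ! b))"
proof -
  have nth_idx: "L ! ([i, j, k, l] ! a) = [L ! i, L ! j, L ! k, L ! l] ! a" if "a < 4" for i j k l a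
    using that by (auto simp: numeral_eq_Suc less_Suc_eq)
  show ?thesis
  proof
    assume "contains_pattern L \<sigma>"
    then obtain idx where "length idx = 4" "sorted_wrt (<) idx" "\<forall>m \<in> set idx. m < length L"
      "\<forall>a<4. \<forall>b<4. L ! (idx ! a) < L ! (idx ! b) \<longleftrightarrow> \<sigma> ! a < \<sigma> ! b"
      using len unfolding contains_pattern_def by auto
    then show "\<exists>i j k l. i < j \<and> j < k \<and> k < l \<and> l < length L \<and>
      (\<forall>a<4. \<forall>b<4. [L ! i, L ! j, L ! k, L ! l] ! a < [L ! i, L ! j, L ! k, L ! l] ! b \<longleftrightarrow> \<sigma> ! a < \<sigma> ! b)"
      unfolding length_4_conv by (auto simp: nth_idx) blast
  next
    assume "\<exists>i j k l. i < j \<and> j < k \<and> k < l \<and> l < length L \<and>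
      (\<forall>a<4. \<forall>b<4. [L ! i, L ! j, L ! k, L ! l] ! a < [L ! i, L ! j, L ! k, L ! l] ! b \<longleftrightarrow> \<sigma> ! a < \<sigma> ! b)"
    then obtain i j k l where "i < j" "j < k" "k < l" "l < length L"
      "\<forall>a<4. \<forall>b<4. [L ! i, L ! j, L ! k, L ! l] ! a < [L ! i, L ! j, L ! k, L ! l] ! b \<longleftrightarrow> \<sigma> ! a < \<sigma> ! b"
      by blast
    then show "contains_pattern L \<sigma>"
      unfolding contains_pattern_def using len
      by (intro exI[of _ "[i, j, k, l]"]) (simp add: nth_idx)
  qed
qed
lemma order_pattern_2413:
  "(\<forall>a<4. \<forall>b<4. [w, x, y, z] ! a < [w, x, y, z] ! b \<longleftrightarrow> [2, 4, 1, 3] ! a < ([2, 4, 1, 3] ! b :: nat))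
   \<longleftrightarrow> y < w \<and> w < z \<and> (z::nat) < x"
  by (simp add: all_less_4) linarith

lemma order_pattern_4213:
  "(\<forall>a<4. \<forall>b<4. [w, x, y, z] ! a < [w, x, y, z] ! b \<longleftrightarrow> [4, 2, 1, 3] ! a < ([4, 2, 1, 3] ! b :: nat))
   \<longleftrightarrow> y < x \<and> x < z \<and> (z::nat) < w"
  by (simp add: all_less_4) linarith

lemma contains_pattern_2413:
  "contains_pattern L [2, 4, 1, 3] \<longleftrightarrow> (\<exists>i j k l. i < j \<and> j < k \<and> k < l \<and> l < length L \<and>
     L ! k < L ! i \<and> L ! i < L ! l \<and> L ! l < L ! j)"
proof -
  have "length [2, 4, 1, 3 :: nat] = 4" by simp
  from contains_pattern_length_4[OF this] show ?thesis unfolding order_pattern_2413 .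
qed

lemma contains_pattern_4213:
  "contains_pattern L [4, 2, 1, 3] \<longleftrightarrow> (\<exists>i j k l. i < j \<and> j < k \<and> k < l \<and> l < length L \<and>
     L ! k < L ! j \<and> L ! j < L ! l \<and> L ! l < L ! i)"
proof -
  have "length [4, 2, 1, 3 :: nat] = 4" by simp
  from contains_pattern_length_4[OF this] show ?thesis unfolding order_pattern_4213 .
qed

lemma contains_pattern_2413_4213_iff:
  assumes "distinct L"
  shows "contains_pattern L [2, 4, 1, 3] \<or> contains_pattern L [4, 2, 1, 3] \<longleftrightarrow> contains_2413_4213 L"
proof
  assume "contains_pattern L [2, 4, 1, 3] \<or> contains_pattern L [4, 2, 1, 3]"
  then obtain i j k l where ijkl: "i < j" "j < k" "k < l" "l < length L"
    and ord: "L ! k < L ! i \<and> L ! i < L ! l \<and> L ! l < L ! j \<or> L ! k < L ! j \<and> L ! j < L ! l \<and> L ! l < L ! i"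
    unfolding contains_pattern_2413 contains_pattern_4213 by blast
  have "precedes L (L ! i) (L ! k)" "precedes L (L ! j) (L ! k)" "precedes L (L ! k) (L ! l)"
    using ijkl by (simp_all add: precedes_nth)
  with ord show "contains_2413_4213 L"
    by (elim disjE conjE) (erule contains_2413_4213I; assumption)+
next
  assume "contains_2413_4213 L"
  then obtain u v c d where "precedes L u c" "precedes L v c" "precedes L c d" and ord: "c < u" "u < d" "d < v"
    unfolding contains_2413_4213_def by blast
  then obtain i j k k' k'' l where "i < k" "j < k'" "k'' < l" "k < length L" "k' < length L" "l < length L"
    and nth: "L ! i = u" "L ! j = v" "L ! k = c" "L ! k' = c" "L ! k'' = c" "L ! l = d"
    unfolding precedes_def by blast
  moreover from calculation have "k' = k" "k'' = k"
    using assms nth_eq_iff_index_eq[of L] by (metis, metis order.strict_trans)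
  moreover have "i \<noteq> j" using nth ord by auto
  ultimately consider "i < j" "j < k" "k < l" "l < length L" | "j < i" "i < k" "k < l" "l < length L"
    by linarith
  then show "contains_pattern L [2, 4, 1, 3] \<or> contains_pattern L [4, 2, 1, 3]"
    unfolding contains_pattern_2413 contains_pattern_4213 using nth ord by cases blast+
qed

lemma Av_2413_4213_iff:
  "p \<in> Av_2413_4213 n \<longleftrightarrow> set p = {1..n} \<and> distinct p \<and> \<not> contains_2413_4213 p"
  using contains_pattern_2413_4213_iff[of p]
  unfolding Av_2413_4213_def permutations_of_set_def by auto

lemma precedes_move_right:
  "precedes (A @ x # B @ C) u v \<Longrightarrow> precedes (A @ B @ x # C) u v \<or> u = x \<and> v \<in> set B"
  by auto

lemma precedes_move_left:
  "precedes (A @ B @ x # C) u v \<Longrightarrow> precedes (A @ x # B @ C) u v \<or> u \<in> set B \<and> v = x"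
  by auto

lemma contains_2413_4213_move_left:
  assumes dist: "distinct (A @ B @ x # C)" and B: "\<forall>b\<in>set B. x < b" and C: "C = [] \<or> hd C < x"
    and "contains_2413_4213 (A @ B @ x # C)"
  shows "contains_2413_4213 (A @ x # B @ C)"
proof -
  obtain u v c d where uc: "precedes (A @ B @ x # C) u c" and vc: "precedes (A @ B @ x # C) v c"
    and cd: "precedes (A @ B @ x # C) c d" and ord: "c < u" "u < d" "d < v"
    using assms(4) unfolding contains_2413_4213_def by blast
  show ?thesis
  proof (cases "c = x \<and> (u \<in> set B \<or> v \<in> set B)")
    case False
    then have "precedes (A @ x # B @ C) u c" "precedes (A @ x # B @ C) v c"
      using precedes_move_left[OF uc] precedes_move_left[OF vc] ord by auto
    moreover have "precedes (A @ x # B @ C) c d"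
      using precedes_move_left[OF cd] ord B by auto
    ultimately show ?thesis using ord by (rule contains_2413_4213I)
  next
    case True
    then have cx: "c = x" ..
    have pivot: "precedes (A @ B @ x # C) u' x \<longleftrightarrow> u' \<in> set A \<union> set B"
      "precedes (A @ B @ x # C) x v' \<longleftrightarrow> v' \<in> set C" for u' v'
      using precedes_pivot[of "A @ B" x C] dist by (simp_all only: append_assoc set_append)
    have "d \<in> set C" "u \<in> set A \<union> set B" "v \<in> set A \<union> set B"
      using uc vc cd unfolding cx pivot by simp_all
    moreover have "hd C \<in> set C" "hd C < x"
      using C \<open>d \<in> set C\<close> by (cases C; simp)+
    ultimately have "precedes (A @ x # B @ C) u (hd C)" "precedes (A @ x # B @ C) v (hd C)"
      "precedes (A @ x # B @ C) (hd C) d"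
      using precedes_hd[of d C] ord cx by auto
    moreover have "hd C < u" using \<open>hd C < x\<close> ord cx by simp
    ultimately show ?thesis using ord by (intro contains_2413_4213I)
  qed
qed

lemma contains_2413_4213_move_right:
  assumes dist: "distinct (A @ x # B @ C)" and B: "\<forall>b\<in>set B. x < b" and A: "A = [] \<or> last A < x"
    and "contains_2413_4213 (A @ x # B @ C)"
  shows "contains_2413_4213 (A @ B @ x # C)"
proof -
  obtain u v c d where uc: "precedes (A @ x # B @ C) u c" and vc: "precedes (A @ x # B @ C) v c"
    and cd: "precedes (A @ x # B @ C) c d" and ord: "c < u" "u < d" "d < v"
    using assms(4) unfolding contains_2413_4213_def by blast
  have uc': "precedes (A @ B @ x # C) u c" and vc': "precedes (A @ B @ x # C) v c"
    using precedes_move_right[OF uc] precedes_move_right[OF vc] ord B by auto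
  show ?thesis
  proof (cases "c = x \<and> d \<in> set B")
    case False
    then have "precedes (A @ B @ x # C) c d" using precedes_move_right[OF cd] by auto
    with uc' vc' ord show ?thesis by (intro contains_2413_4213I)
  next
    case True
    then have cx: "c = x" by simp
    have "u \<in> set A" "v \<in> set A"
      using uc vc unfolding cx precedes_pivot(1)[OF dist] by simp_all
    moreover have "last A \<in> set A" "last A < x"
      using A \<open>u \<in> set A\<close> by (cases A rule: rev_cases; simp)+
    ultimately have "precedes (A @ B @ x # C) u (last A)" "precedes (A @ B @ x # C) v (last A)"
      "precedes (A @ B @ x # C) (last A) d"
      using precedes_last[of u A] precedes_last[of v A] True ord by auto
    moreover have "last A < u" using \<open>last A < x\<close> ord cx by simp
    ultimately show ?thesis using ord by (intro contains_2413_4213I)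
  qed
qed

lemma pos_append_Cons: "x \<notin> set L \<Longrightarrow> pos (L @ x # R) x = length L"
  unfolding pos_def by (induction L) auto

lemma phi_append_Cons:
  assumes "x \<notin> set L"
  shows "phi x (L @ x # R) = (let w2 = rev (takeWhile (\<lambda>y. x < y) (rev L));
                   w1 = take (length L - length w2) L;
                   w3 = takeWhile (\<lambda>y. x < y) R;
                   w4 = dropWhile (\<lambda>y. x < y) R
               in w1 @ w3 @ [x] @ w2 @ w4)"
  unfolding phi_def by (simp add: pos_append_Cons[OF assms] Let_def)

lemma phi_left_smaller:
  assumes "x \<notin> set L" "L = [] \<or> last L < x"
  shows "phi x (L @ x # R) = L @ takeWhile (\<lambda>y. x < y) R @ x # dropWhile (\<lambda>y. x < y) R"
proof -
  have "takeWhile (\<lambda>y. x < y) (rev L) = []"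
    using assms(2) by (cases L rule: rev_cases) auto
  then show ?thesis by (simp add: phi_append_Cons[OF assms(1)])
qed

lemma phi_right_smaller:
  assumes "x \<notin> set L" "R = [] \<or> hd R < x"
  shows "phi x (L @ x # R) =
    rev (dropWhile (\<lambda>y. x < y) (rev L)) @ x # rev (takeWhile (\<lambda>y. x < y) (rev L)) @ R"
proof -
  have "takeWhile (\<lambda>y. x < y) R = []" "dropWhile (\<lambda>y. x < y) R = R"
    using assms(2) by (cases R; auto)+
  moreover have "take (length L - length (takeWhile (\<lambda>y. x < y) (rev L))) L =
      rev (dropWhile (\<lambda>y. x < y) (rev L))"
  proof -
    have "L = rev (dropWhile (\<lambda>y. x < y) (rev L)) @ rev (takeWhile (\<lambda>y. x < y) (rev L))"
      by (metis rev_append rev_rev_ident takeWhile_dropWhile_id)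
    then show ?thesis by (metis append_eq_conv_conj length_append add_diff_cancel_right' length_rev)
  qed
  ultimately show ?thesis by (simp add: phi_append_Cons[OF assms(1)])
qed

lemma phi_double_ascent_moves_right:
  assumes "distinct p" "x \<in> set p" "double_ascent p x"
  obtains A B C where "p = A @ x # B @ C" "phi x p = A @ B @ x # C"
    "\<forall>b \<in> set B. x < b" "C = [] \<or> hd C < x"
proof -
  obtain A R where p: "p = A @ x # R" using split_list[OF assms(2)] by blast
  have x: "x \<notin> set A" "x \<notin> set R" using assms(1) p by auto
  have "A = [] \<or> last A < x"
    using assms(3) unfolding double_ascent_def p pos_append_Cons[OF x(1)]
    by (cases A rule: rev_cases) (auto simp: nth_append Let_def)
  then have "phi x p = A @ takeWhile (\<lambda>y. x < y) R @ x # dropWhile (\<lambda>y. x < y) R"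
    unfolding p by (rule phi_left_smaller[OF x(1)])
  moreover have "dropWhile (\<lambda>y. x < y) R = [] \<or> hd (dropWhile (\<lambda>y. x < y) R) < x"
    using x(2) hd_dropWhile[of "\<lambda>y. x < y" R] hd_in_set set_dropWhileD
    by (metis linorder_neqE)
  ultimately show thesis
    using p by (intro that[of A "takeWhile (\<lambda>y. x < y) R" "dropWhile (\<lambda>y. x < y) R"])
      (auto dest: set_takeWhileD)
qed

lemma phi_double_descent_moves_left:
  assumes "distinct p" "x \<in> set p" "double_descent p x"
  obtains A B C where "p = A @ B @ x # C" "phi x p = A @ x # B @ C"
    "\<forall>b \<in> set B. x < b" "A = [] \<or> last A < x"
proof -
  obtain L C where p: "p = L @ x # C" using split_list[OF assms(2)] by blast
  have x: "x \<notin> set L" using assms(1) p by auto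
  define A where "A = rev (dropWhile (\<lambda>y. x < y) (rev L))"
  define B where "B = rev (takeWhile (\<lambda>y. x < y) (rev L))"
  have "C = [] \<or> hd C < x"
    using assms(3) unfolding double_descent_def p pos_append_Cons[OF x]
    by (cases C) (auto simp: nth_append Let_def)
  then have "phi x p = A @ x # B @ C"
    unfolding p A_def B_def by (rule phi_right_smaller[OF x])
  moreover have "L = A @ B"
    unfolding A_def B_def by (metis rev_append rev_rev_ident takeWhile_dropWhile_id)
  moreover have "A = [] \<or> last A < x"
    using x hd_dropWhile[of "\<lambda>y. x < y" "rev L"] hd_in_set set_dropWhileD
    unfolding A_def by (metis last_rev linorder_neqE set_rev Nil_is_rev_conv)
  moreover have "\<forall>b \<in> set B. x < b"
    unfolding B_def by (auto dest: set_takeWhileD)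
  ultimately show thesis
    using p that by simp
qed

lemma phi'_in_Av_2413_4213:
  assumes p: "p \<in> Av_2413_4213 n" and x: "x \<in> set p"
  shows "phi' x p \<in> Av_2413_4213 n"
proof -
  have set: "set p = {1..n}" and dist: "distinct p" and avoids: "\<not> contains_2413_4213 p"
    using p unfolding Av_2413_4213_iff by auto
  consider "double_ascent p x" | "double_descent p x" | "phi' x p = p"
    unfolding phi'_def by argo
  then show ?thesis
  proof cases
    case 1
    then obtain A B C where "p = A @ x # B @ C" "phi' x p = A @ B @ x # C"
      "\<forall>b \<in> set B. x < b" "C = [] \<or> hd C < x"
      using phi_double_ascent_moves_right[OF dist x] unfolding phi'_def by metis
    then show ?thesis
      using set dist avoids contains_2413_4213_move_left[of A B x C]
      unfolding Av_2413_4213_iff by auto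
  next
    case 2
    then obtain A B C where "p = A @ B @ x # C" "phi' x p = A @ x # B @ C"
      "\<forall>b \<in> set B. x < b" "A = [] \<or> last A < x"
      using phi_double_descent_moves_left[OF dist x] unfolding phi'_def by metis
    then show ?thesis
      using set dist avoids contains_2413_4213_move_right[of A x B C]
      unfolding Av_2413_4213_iff by auto
  qed (use p in simp)
qed

theorem lemma4p8:
  fixes n :: nat and p :: "nat list" and S :: "nat set"
  assumes "n \<ge> 1"
    and "p \<in> Av_2413_4213 n"
    and "S \<subseteq> {1..n}"
  shows "phi'_set S p \<in> Av_2413_4213 n"
proof -
  have "set (sorted_list_of_set S) \<subseteq> {1..n}"
    using assms(3) finite_subset[OF assms(3)] by simp
  moreover have "fold phi' xs q \<in> Av_2413_4213 n"
    if "q \<in> Av_2413_4213 n" "set xs \<subseteq> {1..n}" for xs q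
    using that
  proof (induction xs arbitrary: q)
    case (Cons x xs)
    then have "x \<in> set q" unfolding Av_2413_4213_iff by auto
    with Cons show ?case by (simp add: phi'_in_Av_2413_4213)
  qed simp
  ultimately show ?thesis
    unfolding phi'_set_def using assms(2) by blast
qed

end
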